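(* Let $z\in L_T$ and suppose that \[h_T(z)=\sum_{j=1}^n q\frac{|y_{j-1}-y_j|}{\xi_T(y_j)}\] for distinct points $y_0,\dots,y_n\in L_T$ with $y_0=z$ and $y_n=0$. Then for any $k\in\{1,\dots,n\}$, \[h_T(y_k)=\sum_{j=k+1}^n q\frac{|y_{j-1}-y_j|}{\xi_T(y_j)}.\] Moreover, the sequence $(\xi_T(y_j))_{j\ge1}$ is non-increasing.
   Context: $(\xi(z))_{z\in\mathbb{Z}^d}$ is a positive potential (i.i.d. Pareto with parameter $\alpha>d$, i.e. $\mathbb{P}(\xi(z)>x)=x^{-\alpha}$ for $x\ge1$). $|\cdot|$ is the $\ell_1$-norm. $q=d/(\alpha-d)$, $a(T)=(T/\log T)^q$, $r(T)=(T/\log T)^{q+1}$, $L_T=\{z\in\mathbb{R}^d:r(T)z\in\mathbb{Z}^d\}$, $\xi_T(z)=\xi(r(T)z)/a(T)$. For $z\in L_T$, \[h_T(z)=\inf\Big\{\sum_{j=1}^n q\frac{|y_{j-1}-y_j|}{\xi_T(y_j)}: n\ge0,\ y_0,\dots,y_n\in L_T,\ y_0=z,\ y_n=0\Big\}.\] *)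

theory Defs
  imports "HOL-Analysis.Analysis"
begin

text \<open>Dimension d = CARD('d); points of R^d are real^'d, of Z^d are int^'d.
  alpha is the Pareto parameter, xi the potential on Z^d.\<close>

definition qexp :: "real \<Rightarrow> nat \<Rightarrow> real" where
  "qexp alpha d = real d / (alpha - real d)"

definition aT :: "real \<Rightarrow> nat \<Rightarrow> real \<Rightarrow> real" where
  "aT alpha d T = (T / ln T) powr (qexp alpha d)"

definition rT :: "real \<Rightarrow> nat \<Rightarrow> real \<Rightarrow> real" where
  "rT alpha d T = (T / ln T) powr (qexp alpha d + 1)"

definition l1 :: "real^'d \<Rightarrow> real" where
  "l1 x = (\<Sum>i\<in>UNIV. \<bar>x $ i\<bar>)"

definition LT :: "real \<Rightarrow> real \<Rightarrow> (real^'d) set" where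
  "LT alpha T = {z. \<forall>i. rT alpha CARD('d) T * z $ i \<in> \<int>}"

text \<open>xi_T(z) = xi(r(T) z) / a(T); on L_T the floor is exact.\<close>
definition xiT :: "real \<Rightarrow> (int^'d \<Rightarrow> real) \<Rightarrow> real \<Rightarrow> real^'d \<Rightarrow> real" where
  "xiT alpha xi T z =
     xi (\<chi> i. \<lfloor>rT alpha CARD('d) T * z $ i\<rfloor>) / aT alpha CARD('d) T"

definition path_cost :: "real \<Rightarrow> (int^'d \<Rightarrow> real) \<Rightarrow> real \<Rightarrow> (nat \<Rightarrow> real^'d) \<Rightarrow> nat \<Rightarrow> nat \<Rightarrow> real" where
  "path_cost alpha xi T y k n =
     (\<Sum>j\<in>{k+1..n}. qexp alpha CARD('d) * l1 (y (j - 1) - y j) / xiT alpha xi T (y j))"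

definition hT :: "real \<Rightarrow> (int^'d \<Rightarrow> real) \<Rightarrow> real \<Rightarrow> real^'d \<Rightarrow> real" where
  "hT alpha xi T z = Inf {path_cost alpha xi T y 0 n | y n.
      (\<forall>j\<le>n. y j \<in> LT alpha T) \<and> y 0 = z \<and> y n = 0}"

end

theory Submission
  imports Defs
begin

text \<open>
  Optimal paths obey Bellman's principle: if the tail of an optimal path from y_k to 0 could
  be beaten, splicing the cheaper path after y_0, ..., y_k would beat the whole path. For the
  monotonicity, skip the point y_j: by the triangle inequality the direct step from y_{j-1} to
  y_{j+1} costs at most q (|y_{j-1} - y_j| + |y_j - y_{j+1}|) / xi_T(y_{j+1}), so optimality gives
  |y_{j-1} - y_j| / xi_T(y_j) \<le> |y_{j-1} - y_j| / xi_T(y_{j+1}), and y_{j-1} \<noteq> y_j.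
\<close>

lemma l1_nonneg: "l1 x \<ge> 0"
  unfolding l1_def by (simp add: sum_nonneg)

lemma l1_triangle: "l1 (x + y) \<le> l1 x + l1 y"
  unfolding l1_def by (simp add: sum.distrib[symmetric] sum_mono abs_triangle_ineq)

lemma l1_pos:
  assumes "x \<noteq> 0"
  shows "l1 x > 0"
proof -
  from assms obtain i where "x $ i \<noteq> 0" by (metis vec_eq_iff zero_index)
  then have "\<bar>x $ i\<bar> \<le> l1 x"
    unfolding l1_def by (intro member_le_sum) auto
  with \<open>x $ i \<noteq> 0\<close> show ?thesis by linarith
qed

lemma qexp_pos: "alpha > real d \<Longrightarrow> d > 0 \<Longrightarrow> qexp alpha d > 0"
  unfolding qexp_def by simp

lemma xiT_pos:
  assumes "\<forall>x. xi x > 0" "T > 1"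
  shows "xiT alpha xi T z > 0"
  using assms ln_gt_zero[of T] unfolding xiT_def aT_def by simp

lemma path_cost_nonneg:
  fixes xi :: "int^'d \<Rightarrow> real" and y :: "nat \<Rightarrow> real^'d"
  assumes "alpha > real CARD('d)" "\<forall>x. xi x > 0" "T > 1"
  shows "path_cost alpha xi T y k n \<ge> 0"
  unfolding path_cost_def
  using qexp_pos[OF assms(1)] xiT_pos[OF assms(2,3)] l1_nonneg
  by (intro sum_nonneg divide_nonneg_pos mult_nonneg_nonneg) (auto simp: less_imp_le)

lemma path_cost_split:
  assumes "k \<le> m" "m \<le> n"
  shows "path_cost alpha xi T y k n = path_cost alpha xi T y k m + path_cost alpha xi T y m n"
proof -
  have "{k+1..n} = {k+1..m} \<union> {m+1..n}" using assms by auto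
  then show ?thesis
    unfolding path_cost_def by (simp add: sum.union_disjoint ivl_disj_int)
qed

lemma path_cost_shift:
  fixes y :: "nat \<Rightarrow> real^'d"
  shows "path_cost alpha xi T (\<lambda>j. y (j + k)) 0 m = path_cost alpha xi T y k (m + k)"
proof -
  have "path_cost alpha xi T y k (m + k) =
    (\<Sum>j\<in>{1+k..m+k}. qexp alpha CARD('d) * l1 (y (j - 1) - y j) / xiT alpha xi T (y j))"
    unfolding path_cost_def by (simp add: add.commute)
  also have "\<dots> = (\<Sum>j\<in>{1..m}. qexp alpha CARD('d) * l1 (y (j + k - 1) - y (j + k))
                     / xiT alpha xi T (y (j + k)))"
    by (rule sum.shift_bounds_cl_nat_ivl)
  also have "\<dots> = path_cost alpha xi T (\<lambda>j. y (j + k)) 0 m"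
    unfolding path_cost_def by (intro sum.cong) auto
  finally show ?thesis by simp
qed

lemma path_cost_append:
  assumes "w 0 = y k"
  shows "path_cost alpha xi T (\<lambda>j. if j \<le> k then y j else w (j - k)) 0 (k + m)
       = path_cost alpha xi T y 0 k + path_cost alpha xi T w 0 m"
proof -
  define v where "v = (\<lambda>j. if j \<le> k then y j else w (j - k))"
  have "path_cost alpha xi T v 0 (k + m) = path_cost alpha xi T v 0 k + path_cost alpha xi T v k (m + k)"
    by (subst path_cost_split[of 0 k]) (auto simp: add.commute)
  moreover have "path_cost alpha xi T v 0 k = path_cost alpha xi T y 0 k"
    unfolding path_cost_def v_def by (intro sum.cong) auto
  moreover have "(\<lambda>j. v (j + k)) = w"
    using assms unfolding v_def by (auto intro!: ext)
  then have "path_cost alpha xi T v k (m + k) = path_cost alpha xi T w 0 m"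
    using path_cost_shift[of alpha xi T v k m] by simp
  ultimately show ?thesis unfolding v_def by simp
qed

lemma hT_le_path_cost:
  fixes xi :: "int^'d \<Rightarrow> real" and w :: "nat \<Rightarrow> real^'d"
  assumes "alpha > real CARD('d)" "\<forall>x. xi x > 0" "T > 1"
    and "\<forall>j\<le>m. w j \<in> LT alpha T" "w 0 = p" "w m = 0"
  shows "hT alpha xi T p \<le> path_cost alpha xi T w 0 m"
  unfolding hT_def
proof (rule cInf_lower)
  show "bdd_below {path_cost alpha xi T y 0 n | y n.
      (\<forall>j\<le>n. y j \<in> LT alpha T) \<and> y 0 = p \<and> y n = 0}"
    using path_cost_nonneg[OF assms(1-3)] by (intro bdd_belowI[of _ 0]) auto
qed (use assms in blast)

lemma hT_greatest:
  fixes xi :: "int^'d \<Rightarrow> real" and w :: "nat \<Rightarrow> real^'d"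
  assumes "\<forall>j\<le>m. w j \<in> LT alpha T" "w 0 = p" "w m = 0"
    and "\<And>(u::nat \<Rightarrow> real^'d) n. \<forall>j\<le>n. u j \<in> LT alpha T \<Longrightarrow> u 0 = p \<Longrightarrow> u n = 0
           \<Longrightarrow> c \<le> path_cost alpha xi T u 0 n"
  shows "c \<le> hT alpha xi T p"
  unfolding hT_def by (rule cInf_greatest) (use assms in blast)+

lemma hT_optimal_suffix:
  fixes xi :: "int^'d \<Rightarrow> real" and y :: "nat \<Rightarrow> real^'d"
  assumes alpha: "alpha > real CARD('d)" and xi_pos: "\<forall>x. xi x > 0" and T: "T > 1"
    and yL: "\<forall>j\<le>n. y j \<in> LT alpha T" and yn: "y n = 0"
    and opt: "hT alpha xi T (y 0) = path_cost alpha xi T y 0 n"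
    and k: "k \<le> n"
  shows "hT alpha xi T (y k) = path_cost alpha xi T y k n"
proof (rule antisym)
  have tailL: "\<forall>j\<le>n - k. y (j + k) \<in> LT alpha T" using yL k by auto
  have "hT alpha xi T (y k) \<le> path_cost alpha xi T (\<lambda>j. y (j + k)) 0 (n - k)"
    by (rule hT_le_path_cost[OF alpha xi_pos T tailL]) (use k yn in auto)
  with k show "hT alpha xi T (y k) \<le> path_cost alpha xi T y k n"
    by (simp add: path_cost_shift)
  show "path_cost alpha xi T y k n \<le> hT alpha xi T (y k)"
  proof (rule hT_greatest[OF tailL])
    show "y (n - k + k) = 0" using k yn by simp
    fix u :: "nat \<Rightarrow> real^'d" and m
    assume uL: "\<forall>j\<le>m. u j \<in> LT alpha T" and u0: "u 0 = y k" and um: "u m = 0"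
    have "path_cost alpha xi T y 0 k + path_cost alpha xi T y k n = hT alpha xi T (y 0)"
      using opt path_cost_split[of 0 k n alpha xi T y] k by simp
    also have "\<dots> \<le> path_cost alpha xi T (\<lambda>j. if j \<le> k then y j else u (j - k)) 0 (k + m)"
      by (rule hT_le_path_cost[OF alpha xi_pos T]) (use uL u0 yL k um in auto)
    also have "\<dots> = path_cost alpha xi T y 0 k + path_cost alpha xi T u 0 m"
      by (rule path_cost_append) (rule u0)
    finally show "path_cost alpha xi T y k n \<le> path_cost alpha xi T u 0 m" by simp
  qed simp
qed

lemma hT_le_step:
  fixes xi :: "int^'d \<Rightarrow> real"
  assumes alpha: "alpha > real CARD('d)" and xi_pos: "\<forall>x. xi x > 0" and T: "T > 1"
    and p: "p \<in> LT alpha T" and w: "w \<in> LT alpha T"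
  shows "hT alpha xi T p
           \<le> qexp alpha CARD('d) * l1 (p - w) / xiT alpha xi T w + hT alpha xi T w"
proof -
  define s where "s = (\<lambda>i::nat. if i = 0 then p else w)"
  define e where "e = (\<lambda>i::nat. if i = 0 then w else 0)"
  have "0 \<in> LT alpha T" unfolding LT_def by simp
  then have eL: "\<forall>j\<le>1. e j \<in> LT alpha T" using w by (auto simp: e_def)
  have "hT alpha xi T w \<ge> hT alpha xi T p - path_cost alpha xi T s 0 1"
  proof (rule hT_greatest[OF eL])
    fix u :: "nat \<Rightarrow> real^'d" and m
    assume uL: "\<forall>j\<le>m. u j \<in> LT alpha T" and u0: "u 0 = w" and um: "u m = 0"
    have "hT alpha xi T p \<le> path_cost alpha xi T (\<lambda>j. if j \<le> 1 then s j else u (j - 1)) 0 (1 + m)"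
      by (rule hT_le_path_cost[OF alpha xi_pos T]) (use uL u0 p w um in \<open>auto simp: s_def\<close>)
    also have "\<dots> = path_cost alpha xi T s 0 1 + path_cost alpha xi T u 0 m"
      by (rule path_cost_append) (simp add: u0 s_def)
    finally show "hT alpha xi T p - path_cost alpha xi T s 0 1 \<le> path_cost alpha xi T u 0 m"
      by simp
  qed (simp_all add: e_def)
  moreover have "path_cost alpha xi T s 0 1 = qexp alpha CARD('d) * l1 (p - w) / xiT alpha xi T w"
    unfolding path_cost_def s_def by simp
  ultimately show ?thesis by simp
qed

lemma optimal_path_xiT_antimono:
  fixes xi :: "int^'d \<Rightarrow> real" and y :: "nat \<Rightarrow> real^'d"
  assumes alpha: "alpha > real CARD('d)" and xi_pos: "\<forall>x. xi x > 0" and T: "T > 1"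
    and yL: "\<forall>j\<le>n. y j \<in> LT alpha T"
    and opt: "\<forall>k\<le>n. hT alpha xi T (y k) = path_cost alpha xi T y k n"
    and j: "1 \<le> j" "j < n" and distinct: "y (j - 1) \<noteq> y j"
  shows "xiT alpha xi T (y (j + 1)) \<le> xiT alpha xi T (y j)"
proof -
  define q where "q = qexp alpha CARD('d)"
  define a b c where "a = y (j - 1)" and "b = y j" and "c = y (j + 1)"
  define xb xc where "xb = xiT alpha xi T b" and "xc = xiT alpha xi T c"
  have q: "q > 0" using qexp_pos[OF alpha] by (simp add: q_def)
  have xb: "xb > 0" and xc: "xc > 0" using xiT_pos[OF xi_pos T] by (auto simp: xb_def xc_def)
  have "path_cost alpha xi T y (j - 1) n
          = path_cost alpha xi T y (j - 1) (j + 1) + path_cost alpha xi T y (j + 1) n"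
    using j by (intro path_cost_split) auto
  moreover have "path_cost alpha xi T y (j - 1) (j + 1) = q * l1 (a - b) / xb + q * l1 (b - c) / xc"
    using j by (simp add: path_cost_def q_def a_def b_def c_def xb_def xc_def)
  ultimately have optimal: "hT alpha xi T a = q * l1 (a - b) / xb + q * l1 (b - c) / xc + hT alpha xi T c"
    using opt j by (simp add: a_def c_def)
  have shortcut: "hT alpha xi T a \<le> q * l1 (a - c) / xc + hT alpha xi T c"
    unfolding q_def xc_def using j yL by (intro hT_le_step[OF alpha xi_pos T]) (auto simp: a_def c_def)
  have "q * l1 (a - c) / xc \<le> q * (l1 (a - b) + l1 (b - c)) / xc"
    using l1_triangle[of "a - b" "b - c"] q xc by (intro divide_right_mono mult_left_mono) auto
  with optimal shortcut have "(q * l1 (a - b)) * inverse xb \<le> (q * l1 (a - b)) * inverse xc"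
    by (simp add: divide_inverse distrib_left distrib_right)
  moreover have "q * l1 (a - b) > 0"
    using q l1_pos[of "a - b"] distinct by (simp add: a_def b_def)
  ultimately have "inverse xb \<le> inverse xc" by (simp add: mult_le_cancel_left_pos)
  with xb xc show ?thesis by (simp add: xb_def xc_def b_def c_def)
qed

theorem lemma3p3:
  fixes alpha T :: real and xi :: "int^'d \<Rightarrow> real"
    and z :: "real^'d" and y :: "nat \<Rightarrow> real^'d" and n :: nat
  assumes alpha: "alpha > real CARD('d)"
    and xi_pos: "\<forall>x. xi x > 0"
    and T: "T > 1"
    and z: "z \<in> LT alpha T"
    and yL: "\<forall>j\<le>n. y j \<in> LT alpha T"
    and dist: "inj_on y {0..n}"
    and y0: "y 0 = z" and yn: "y n = 0"
    and opt: "hT alpha xi T z = path_cost alpha xi T y 0 n"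
  shows "(\<forall>k\<in>{1..n}. hT alpha xi T (y k) = path_cost alpha xi T y k n)
       \<and> (\<forall>j. 1 \<le> j \<and> j < n \<longrightarrow> xiT alpha xi T (y (j + 1)) \<le> xiT alpha xi T (y j))"
proof -
  have suffix: "\<forall>k\<le>n. hT alpha xi T (y k) = path_cost alpha xi T y k n"
    using hT_optimal_suffix[OF alpha xi_pos T yL yn] opt y0 by simp
  have "xiT alpha xi T (y (j + 1)) \<le> xiT alpha xi T (y j)" if "1 \<le> j" "j < n" for j
  proof (rule optimal_path_xiT_antimono[OF alpha xi_pos T yL suffix that])
    show "y (j - 1) \<noteq> y j"
      using inj_on_eq_iff[OF dist, of "j - 1" j] that by auto
  qed
  with suffix show ?thesis by auto
qed

end
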